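(* Let $Q$ be a complete quiver with at least two frozen vertices, and let $j\neq k$ be mutable vertices such that $j$ is cycle-preserving for $Q$ and $k$ is cycle-preserving for $\mu_j(Q)$. If $j$ is neither red nor green in $Q$, then $j$ is red or green in $\mu_k(\mu_j(Q))$.
   Context: A quiver is a finite directed multigraph with no loops and no oriented 2-cycles, whose vertex set is partitioned into mutable and frozen vertices; arrows between two frozen vertices are ignored. $b_{ik}$ = number of arrows $i\to k$ minus number of arrows $k\to i$; $Q|_S$ is the induced subquiver on $S$. Mutation $\mu_j$ at mutable $j$: for each path $i\to j\to k$ add $b_{ij}b_{jk}$ arrows $i\to k$, reverse all arrows at $j$, cancel 2-cycles. Complete: at least one arrow between every pair of vertices at least one of which is mutable. A 3-vertex (sub)quiver is an oriented 3-cycle if it has at most one frozen vertex and its underlying directed graph is not acyclic. A mutable vertex $j$ is cycle-preserving for $Q$ if whenever $Q|_{\{i,j,k\}}$ is an oriented 3-cycle containing $j$, so is $\mu_j(Q)|_{\{i,j,k\}}$. A mutable vertex adjacent to at least one frozen vertex is red (resp. green) if all arrows between it and frozen vertices point towards (resp. away from) it. *)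

theory Defs
  imports Main
begin

text \<open>A quiver is given by a finite vertex set V, a set F \<subseteq> V of frozen vertices,
and the exchange matrix b, where b i k = #arrows i->k minus #arrows k->i.
(No loops and no oriented 2-cycles means the quiver is determined by b.)
Entries between two frozen vertices are ignored by all notions below.\<close>

definition quiver :: "'v set \<Rightarrow> 'v set \<Rightarrow> ('v \<Rightarrow> 'v \<Rightarrow> int) \<Rightarrow> bool" where
  "quiver V F b \<longleftrightarrow> finite V \<and> F \<subseteq> V \<and> (\<forall>i\<in>V. \<forall>k\<in>V. b i k = - b k i)"

text \<open>Mutation at j: for each path i->j->k add b_ij b_jk arrows i->k, reverse arrows
at j, cancel 2-cycles.\<close>
definition mut :: "'v \<Rightarrow> ('v \<Rightarrow> 'v \<Rightarrow> int) \<Rightarrow> ('v \<Rightarrow> 'v \<Rightarrow> int)" where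
  "mut j b = (\<lambda>i k. if i = j \<or> k = j then - b i k
      else b i k + max 0 (b i j) * max 0 (b j k) - max 0 (b k j) * max 0 (b j i))"

definition complete :: "'v set \<Rightarrow> 'v set \<Rightarrow> ('v \<Rightarrow> 'v \<Rightarrow> int) \<Rightarrow> bool" where
  "complete V F b \<longleftrightarrow>
     (\<forall>i\<in>V. \<forall>k\<in>V. i \<noteq> k \<and> (i \<notin> F \<or> k \<notin> F) \<longrightarrow> b i k \<noteq> 0)"

text \<open>The induced subquiver on S = {i,j,k} (distinct) is an oriented 3-cycle: at most one
frozen vertex and the underlying directed graph is not acyclic.\<close>
definition oriented_3cycle ::
  "'v set \<Rightarrow> ('v \<Rightarrow> 'v \<Rightarrow> int) \<Rightarrow> 'v \<Rightarrow> 'v \<Rightarrow> 'v \<Rightarrow> bool" where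
  "oriented_3cycle F b i j k \<longleftrightarrow>
     card ({i, j, k} \<inter> F) \<le> 1 \<and>
     \<not> acyclic {(x, y). x \<in> {i, j, k} \<and> y \<in> {i, j, k} \<and> \<not> (x \<in> F \<and> y \<in> F) \<and> 0 < b x y}"

definition cycle_preserving ::
  "'v set \<Rightarrow> 'v set \<Rightarrow> ('v \<Rightarrow> 'v \<Rightarrow> int) \<Rightarrow> 'v \<Rightarrow> bool" where
  "cycle_preserving V F b j \<longleftrightarrow> j \<in> V - F \<and>
     (\<forall>i\<in>V. \<forall>k\<in>V. i \<noteq> j \<and> k \<noteq> j \<and> i \<noteq> k \<longrightarrow>
        oriented_3cycle F b i j k \<longrightarrow> oriented_3cycle F (mut j b) i j k)"

definition red :: "'v set \<Rightarrow> 'v set \<Rightarrow> ('v \<Rightarrow> 'v \<Rightarrow> int) \<Rightarrow> 'v \<Rightarrow> bool" where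
  "red V F b j \<longleftrightarrow> j \<in> V - F \<and> (\<exists>f\<in>F. b j f \<noteq> 0) \<and> (\<forall>f\<in>F. b f j \<ge> 0)"

definition green :: "'v set \<Rightarrow> 'v set \<Rightarrow> ('v \<Rightarrow> 'v \<Rightarrow> int) \<Rightarrow> 'v \<Rightarrow> bool" where
  "green V F b j \<longleftrightarrow> j \<in> V - F \<and> (\<exists>f\<in>F. b j f \<noteq> 0) \<and> (\<forall>f\<in>F. b j f \<ge> 0)"

end

(* Completeness and "neither red nor green" give frozen vertices f, f' with f -> j -> f'.
   Reversing all arrows swaps red and green and commutes with mutation, so we may assume
   j -> k.  Mutation at j turns every arrow j -> f into f -> j, and the later mutation at k
   only adds arrows f -> j to it.  For an arrow f -> j, the vertices f, k, j form the
   oriented 3-cycle f -> k -> j -> f in mu_j(Q): either f -> j -> k -> f was a 3-cycle of Q,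
   which survives mutation at j, or f -> k already, strengthened by the path f -> j -> k.
   This cycle survives mutation at k, which forces the arrow f -> j in mu_k(mu_j(Q)).
   So j is red there. *)

theory Submission
  imports Defs
begin

definition opposite :: "('v \<Rightarrow> 'v \<Rightarrow> 'a) \<Rightarrow> 'v \<Rightarrow> 'v \<Rightarrow> 'a" where
  "opposite b i k = b k i"

lemma opposite_opposite [simp]: "opposite (opposite b) = b"
  by (intro ext) (simp add: opposite_def)

lemma mut_opposite: "mut j (opposite b) = opposite (mut j b)"
  by (intro ext) (auto simp: mut_def opposite_def)

lemma quiver_opposite: "quiver V F (opposite b) \<longleftrightarrow> quiver V F b"
  by (auto simp: quiver_def opposite_def)

lemma complete_opposite: "complete V F (opposite b) \<longleftrightarrow> complete V F b"
  by (auto simp: complete_def opposite_def)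

lemma oriented_3cycle_opposite:
  "oriented_3cycle F (opposite b) i j k \<longleftrightarrow> oriented_3cycle F b i j k"
proof -
  have "{(x, y). x \<in> {i, j, k} \<and> y \<in> {i, j, k} \<and> \<not> (x \<in> F \<and> y \<in> F) \<and> 0 < opposite b x y}
      = {(x, y). x \<in> {i, j, k} \<and> y \<in> {i, j, k} \<and> \<not> (x \<in> F \<and> y \<in> F) \<and> 0 < b x y}\<inverse>"
    by (auto simp: opposite_def)
  then show ?thesis
    by (simp add: oriented_3cycle_def)
qed

lemma cycle_preserving_opposite:
  "cycle_preserving V F (opposite b) j \<longleftrightarrow> cycle_preserving V F b j"
  by (simp add: cycle_preserving_def oriented_3cycle_opposite mut_opposite)

lemma red_opposite:
  assumes "quiver V F b"
  shows "red V F (opposite b) j \<longleftrightarrow> green V F b j"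
  using assms by (fastforce simp: red_def green_def quiver_def opposite_def)

lemma green_opposite:
  assumes "quiver V F b"
  shows "green V F (opposite b) j \<longleftrightarrow> red V F b j"
  using red_opposite[of V F "opposite b" j] assms by (simp add: quiver_opposite)

lemma quiver_mut:
  assumes "quiver V F b" "j \<in> V"
  shows "quiver V F (mut j b)"
  unfolding quiver_def
proof (intro conjI ballI)
  fix i k
  assume "i \<in> V" "k \<in> V"
  then have "b i k = - b k i" "b i j = - b j i" "b k j = - b j k"
    using assms unfolding quiver_def by blast+
  then show "mut j b i k = - mut j b k i"
    by (simp add: mut_def)
qed (use assms in \<open>simp_all add: quiver_def\<close>)

lemma oriented_3cycle_perm:
  assumes "{x, y, z} = {x', y', z'}"
  shows "oriented_3cycle F b x y z \<longleftrightarrow> oriented_3cycle F b x' y' z'"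
  unfolding oriented_3cycle_def assms ..

lemma oriented_3cycleI:
  assumes "distinct [x, y, z]" "card ({x, y, z} \<inter> F) \<le> 1"
    and "0 < b x y" "0 < b y z" "0 < b z x"
  shows "oriented_3cycle F b x y z"
proof -
  let ?R = "{(u, w). u \<in> {x, y, z} \<and> w \<in> {x, y, z} \<and> \<not> (u \<in> F \<and> w \<in> F) \<and> 0 < b u w}"
  have "\<not> (u \<in> F \<and> w \<in> F)" if "u \<in> {x, y, z}" "w \<in> {x, y, z}" "u \<noteq> w" for u w
  proof
    assume "u \<in> F \<and> w \<in> F"
    then have "card {u, w} \<le> card ({x, y, z} \<inter> F)"
      using that by (intro card_mono) auto
    then show False
      using that assms(2) by simp
  qed
  then have "(x, y) \<in> ?R" "(y, z) \<in> ?R" "(z, x) \<in> ?R"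
    using assms by auto
  then have "(x, x) \<in> ?R\<^sup>+"
    by (meson trancl.r_into_trancl trancl_into_trancl)
  then show ?thesis
    using assms(2) unfolding oriented_3cycle_def acyclic_def by blast
qed

lemma oriented_3cycle_closes:
  assumes "quiver V F b" "x \<in> V" "y \<in> V" "z \<in> V"
    and "oriented_3cycle F b x y z" "0 < b x y" "0 < b y z"
  shows "0 < b z x"
proof (rule ccontr)
  assume "\<not> 0 < b z x"
  moreover have "b u w = - b w u" if "u \<in> {x, y, z}" "w \<in> {x, y, z}" for u w
    using assms(1-4) that unfolding quiver_def by blast
  ultimately have signs: "b x x = 0" "b y y = 0" "b z z = 0" "b y x < 0" "b z y < 0" "b z x \<le> 0"
    using assms(6,7) by (smt (verit) insertCI)+
  then have distinct: "x \<noteq> y" "y \<noteq> z" "x \<noteq> z"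
    using assms(6,7) by auto
  define rank where "rank u = (if u = x then 0 else if u = y then 1 else 2 :: nat)" for u
  have "{(u, w). u \<in> {x, y, z} \<and> w \<in> {x, y, z} \<and> \<not> (u \<in> F \<and> w \<in> F) \<and> 0 < b u w}
      \<subseteq> measure rank"
    using signs distinct by (auto simp: rank_def)
  then show False
    using assms(5) wf_acyclic[OF wf_subset[OF wf_measure]] unfolding oriented_3cycle_def by blast
qed

(* Mutation at j reverses i -> j -> l; for the cycle to survive, l -> i must turn around too. *)
lemma cycle_preserving_mut_reverses_arrow:
  assumes "quiver V F b" "cycle_preserving V F b j" "i \<in> V" "l \<in> V"
    and "distinct [i, j, l]" "card ({i, j, l} \<inter> F) \<le> 1"
    and "0 < b i j" "0 < b j l" "0 < b l i"
  shows "0 < mut j b i l"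
proof -
  have j: "j \<in> V"
    using assms(2) unfolding cycle_preserving_def by blast
  have "oriented_3cycle F b i j l"
    using assms(5-9) by (rule oriented_3cycleI)
  then have "oriented_3cycle F (mut j b) i j l"
    using assms(2-5) unfolding cycle_preserving_def by auto
  moreover have "{i, j, l} = {l, j, i}"
    by blast
  ultimately have cycle: "oriented_3cycle F (mut j b) l j i"
    by (metis oriented_3cycle_perm)
  have "b l j = - b j l" "b j i = - b i j"
    using assms(1,3,4) j unfolding quiver_def by blast+
  then have "0 < mut j b l j" "0 < mut j b j i"
    using assms(5,7,8) by (auto simp: mut_def)
  then show ?thesis
    using oriented_3cycle_closes[OF quiver_mut[OF assms(1) j] assms(4) j assms(3) cycle] by blast
qed

lemma mut_mut_keeps_arrow_from_frozen:
  assumes "quiver V F b" "complete V F b"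
    and "j \<in> V - F" "k \<in> V - F" "j \<noteq> k"
    and "cycle_preserving V F b j" "cycle_preserving V F (mut j b) k"
    and "0 < b j k" "f \<in> F" "b j f < 0"
  shows "0 < mut k (mut j b) f j"
proof -
  have V: "f \<in> V" "j \<in> V" "k \<in> V" and distinct: "distinct [f, j, k]" "distinct [f, k, j]"
    using assms(1,3-5,9) unfolding quiver_def by auto
  have antisym: "b f j = - b j f" "b k j = - b j k" "b k f = - b f k"
    using assms(1) V unfolding quiver_def by blast+
  have fj: "0 < b f j" and kj: "b k j < 0"
    using antisym assms(8,10) by linarith+
  have "{f, j, k} \<inter> F = {f}" "{f, k, j} \<inter> F = {f}"
    using assms(3,4,9) by auto
  then have card: "card ({f, j, k} \<inter> F) \<le> 1" "card ({f, k, j} \<inter> F) \<le> 1"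
    by simp_all
  have fk: "0 < mut j b f k"
  proof (cases "0 < b k f")
    case True
    then show ?thesis
      by (rule cycle_preserving_mut_reverses_arrow[OF assms(1,6) V(1,3) distinct(1) card(1) fj assms(8)])
  next
    case False
    moreover have "b k f \<noteq> 0"
      using assms(2,4) V(1,3) distinct unfolding complete_def by auto
    ultimately have "0 < b f k"
      using antisym by linarith
    moreover have "mut j b f k = b f k + b f j * b j k"
      using distinct fj kj assms(8) by (simp add: mut_def)
    ultimately show ?thesis
      using fj assms(8) by (simp add: add_pos_pos)
  qed
  moreover have "0 < mut j b k j" "0 < mut j b j f"
    using distinct antisym assms(8,10) by (simp_all add: mut_def)
  ultimately show ?thesis
    using cycle_preserving_mut_reverses_arrow[OF quiver_mut[OF assms(1) V(2)] assms(7) V(1,2) distinct(2) card(2)]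
    by blast
qed

lemma red_after_mut_mut:
  assumes "quiver V F b" "complete V F b" "F \<noteq> {}"
    and "j \<in> V - F" "k \<in> V - F" "j \<noteq> k"
    and "cycle_preserving V F b j" "cycle_preserving V F (mut j b) k"
    and "0 < b j k" "\<not> green V F b j"
  shows "red V F (mut k (mut j b)) j"
proof -
  let ?b = "mut k (mut j b)"
  have V: "j \<in> V" "k \<in> V" "F \<subseteq> V"
    using assms(1,4,5) unfolding quiver_def by auto
  have into_j: "0 \<le> ?b f j" if f: "f \<in> F" for f
  proof (cases "b j f < 0")
    case True
    then show ?thesis
      using mut_mut_keeps_arrow_from_frozen[OF assms(1,2,4-9) f] by simp
  next
    case False
    have "b f j = - b j f" "b k j = - b j k"
      using assms(1) V f unfolding quiver_def by blast+
    then have "?b f j = b j f + b j k * max 0 (mut j b f k)"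
      using assms(4-6,9) f by (auto simp: mut_def)
    then show ?thesis
      using False assms(9) by simp
  qed
  obtain f0 where "f0 \<in> F"
    using assms(3) by blast
  then have "\<exists>f\<in>F. b j f \<noteq> 0"
    using assms(2,4) V unfolding complete_def by fastforce
  then obtain f where f: "f \<in> F" "b j f < 0"
    using assms(4,10) unfolding green_def by force
  moreover have "?b j f = - ?b f j"
    using quiver_mut[OF quiver_mut[OF assms(1)]] V f unfolding quiver_def by blast
  ultimately have "?b j f \<noteq> 0"
    using mut_mut_keeps_arrow_from_frozen[OF assms(1,2,4-9)] by force
  then show ?thesis
    using into_j f assms(4) unfolding red_def by blast
qed

theorem mainTheorem7:
  fixes V F :: "'v set" and b :: "'v \<Rightarrow> 'v \<Rightarrow> int" and j k :: 'v
  assumes "quiver V F b"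
    and "complete V F b"
    and "card F \<ge> 2"
    and "j \<in> V - F" and "k \<in> V - F" and "j \<noteq> k"
    and "cycle_preserving V F b j"
    and "cycle_preserving V F (mut j b) k"
    and "\<not> red V F b j" and "\<not> green V F b j"
  shows "red V F (mut k (mut j b)) j \<or> green V F (mut k (mut j b)) j"
proof -
  have F: "F \<noteq> {}"
    using assms(3) by auto \<comment> \<open>only this much of \<open>card F \<ge> 2\<close> is needed\<close>
  have "b j k \<noteq> 0"
    using assms(1,2,4-6) unfolding complete_def quiver_def by blast
  moreover have "opposite b j k = - b j k"
    using assms(1,4,5) unfolding quiver_def opposite_def by blast
  ultimately consider "0 < b j k" | "0 < opposite b j k"
    by fastforce
  then show ?thesis
  proof cases
    case 1
    then show ?thesis
      using red_after_mut_mut[OF assms(1,2) F assms(4-8) _ assms(10)] by blast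
  next
    case 2
    have "red V F (mut k (mut j (opposite b))) j"
      by (rule red_after_mut_mut)
        (use assms F 2 in \<open>simp_all add: quiver_opposite complete_opposite
          cycle_preserving_opposite mut_opposite green_opposite\<close>)
    then show ?thesis
      using quiver_mut[OF quiver_mut[OF assms(1)]] assms(4,5)
      by (simp add: mut_opposite red_opposite)
  qed
qed

end
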